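(* For every $m\ge1$ there is a market with $m$ items and $m+1$ unit-demand buyers whose minimum Walrasian revenue is $m$, and for which there exist a selling order of the items and a subgame perfect equilibrium of the sequential first-price auction with revenue $1$.
   Context: Unit demand: buyer $i$ has values $v_{i,j}\ge0$ and $v_i(S)=\max_{j\in S}v_{i,j}$, $v_i(\emptyset)=0$; utility is quasi-linear. A Walrasian equilibrium is a price vector $p\ge0$ and an allocation of every item to a buyer such that each buyer's bundle maximizes $v_i(T)-\sum_{j\in T}p_j$ over all bundles $T$; a minimum Walrasian equilibrium has prices coordinatewise at most those of every Walrasian equilibrium, and the minimum Walrasian revenue is the sum of its prices. In a sequential first-price auction the items are sold one at a time in the given order, each by a sealed-bid first-price auction without reserve price (highest bidder wins, ties broken by a seller-chosen rule, winner pays his bid). Full information. A subgame perfect equilibrium is a (pure) strategy profile that is a Nash equilibrium in every subgame; its revenue is the total payment on the equilibrium path. *)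

theory Defs
  imports Complex_Main
begin

(* Buyers are 0..<n, items are 0..<m, v i j is buyer i's value for item j. *)

definition unit_val :: "(nat \<Rightarrow> nat \<Rightarrow> real) \<Rightarrow> nat \<Rightarrow> nat set \<Rightarrow> real" where
  "unit_val v i S = (if S = {} then 0 else Max ((v i) ` S))"

definition walrasian_eq ::
  "nat \<Rightarrow> nat \<Rightarrow> (nat \<Rightarrow> nat \<Rightarrow> real) \<Rightarrow> (nat \<Rightarrow> real) \<Rightarrow> (nat \<Rightarrow> nat) \<Rightarrow> bool" where
  "walrasian_eq n m v p a \<longleftrightarrow>
     (\<forall>j<m. 0 \<le> p j) \<and> (\<forall>j<m. a j < n) \<and>
     (\<forall>i<n. \<forall>T. T \<subseteq> {..<m} \<longrightarrow>
        unit_val v i T - sum p T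
          \<le> unit_val v i {j. j < m \<and> a j = i} - sum p {j. j < m \<and> a j = i})"

definition min_walrasian_eq ::
  "nat \<Rightarrow> nat \<Rightarrow> (nat \<Rightarrow> nat \<Rightarrow> real) \<Rightarrow> (nat \<Rightarrow> real) \<Rightarrow> bool" where
  "min_walrasian_eq n m v p \<longleftrightarrow>
     (\<exists>a. walrasian_eq n m v p a) \<and>
     (\<forall>q a'. walrasian_eq n m v q a' \<longrightarrow> (\<forall>j<m. p j \<le> q j))"

(* Sequential first-price auction.  A history is the list of bid profiles of the
   auctions already held (full information); stage k sells item \<sigma> k. *)
type_synonym history = "(nat \<Rightarrow> real) list"

definition bid_profile :: "nat \<Rightarrow> (nat \<Rightarrow> history \<Rightarrow> real) \<Rightarrow> history \<Rightarrow> (nat \<Rightarrow> real)" where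
  "bid_profile n s h = (\<lambda>i. if i < n then s i h else 0)"

fun run :: "nat \<Rightarrow> (nat \<Rightarrow> history \<Rightarrow> real) \<Rightarrow> history \<Rightarrow> nat \<Rightarrow> history" where
  "run n s h 0 = h"
| "run n s h (Suc k) = run n s (h @ [bid_profile n s h]) k"

definition outcome :: "nat \<Rightarrow> nat \<Rightarrow> (nat \<Rightarrow> history \<Rightarrow> real) \<Rightarrow> history \<Rightarrow> history" where
  "outcome n m s h = run n s h (m - length h)"

definition valid_tie :: "nat \<Rightarrow> (history \<Rightarrow> (nat \<Rightarrow> real) \<Rightarrow> nat) \<Rightarrow> bool" where
  "valid_tie n tb \<longleftrightarrow> (\<forall>h b. tb h b < n \<and> (\<forall>i<n. b i \<le> b (tb h b)))"

definition winner :: "(history \<Rightarrow> (nat \<Rightarrow> real) \<Rightarrow> nat) \<Rightarrow> history \<Rightarrow> nat \<Rightarrow> nat" where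
  "winner tb H k = tb (take k H) (H ! k)"

definition payoff ::
  "nat \<Rightarrow> (nat \<Rightarrow> nat \<Rightarrow> real) \<Rightarrow> (nat \<Rightarrow> nat) \<Rightarrow> (history \<Rightarrow> (nat \<Rightarrow> real) \<Rightarrow> nat)
     \<Rightarrow> history \<Rightarrow> nat \<Rightarrow> real" where
  "payoff m v \<sigma> tb H i =
     unit_val v i {\<sigma> k | k. k < m \<and> winner tb H k = i}
     - (\<Sum>k\<in>{k. k < m \<and> winner tb H k = i}. (H ! k) i)"

definition revenue :: "nat \<Rightarrow> (history \<Rightarrow> (nat \<Rightarrow> real) \<Rightarrow> nat) \<Rightarrow> history \<Rightarrow> real" where
  "revenue m tb H = (\<Sum>k<m. (H ! k) (winner tb H k))"

definition valid_history :: "nat \<Rightarrow> nat \<Rightarrow> history \<Rightarrow> bool" where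
  "valid_history n m h \<longleftrightarrow> length h \<le> m \<and>
     (\<forall>b\<in>set h. \<forall>i. (i < n \<longrightarrow> 0 \<le> b i) \<and> (n \<le> i \<longrightarrow> b i = 0))"

definition valid_strategy :: "(history \<Rightarrow> real) \<Rightarrow> bool" where
  "valid_strategy f \<longleftrightarrow> (\<forall>h. 0 \<le> f h)"

definition is_SPE ::
  "nat \<Rightarrow> nat \<Rightarrow> (nat \<Rightarrow> nat \<Rightarrow> real) \<Rightarrow> (nat \<Rightarrow> nat) \<Rightarrow> (history \<Rightarrow> (nat \<Rightarrow> real) \<Rightarrow> nat)
     \<Rightarrow> (nat \<Rightarrow> history \<Rightarrow> real) \<Rightarrow> bool" where
  "is_SPE n m v \<sigma> tb s \<longleftrightarrow>
     (\<forall>i<n. valid_strategy (s i)) \<and>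
     (\<forall>h. valid_history n m h \<longrightarrow>
        (\<forall>i<n. \<forall>f. valid_strategy f \<longrightarrow>
           payoff m v \<sigma> tb (outcome n m (s(i := f)) h) i \<le> payoff m v \<sigma> tb (outcome n m s h) i))"

end

(*
  Buyer 0, the generalist, values every item at 1; buyer k + 1, the owner of item k, values only
  item k, at 1. An item priced below 1 in a Walrasian equilibrium must go to its owner, and then
  the generalist would demand it; hence all Walrasian prices are at least 1, and the unit prices
  are the minimum ones.

  In the auction, the generalist and the owner of the item on sale both bid 1 until the
  generalist has won an item, after which everybody bids 0; ties go to the generalist at the
  first stage and to the owner later. On the path the generalist buys the first item for 1 and
  every other owner gets his item for free. No deviation pays: the generalist can only win an
  item against a bid of 1 of its owner, and an owner either gets his item for free anyway or
  faces a bid of 1 from the generalist at his stage.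
*)

theory Submission
  imports Defs
begin

lemma run_extends: "\<exists>t. run n s h d = h @ t \<and> length t = d"
proof (induction d arbitrary: h)
  case 0
  show ?case by simp
next
  case (Suc d)
  then obtain t where "run n s (h @ [bid_profile n s h]) d = (h @ [bid_profile n s h]) @ t"
    and "length t = d" by blast
  then show ?case by (intro exI[of _ "bid_profile n s h # t"]) simp
qed

lemma nth_run:
  assumes "length h \<le> k" "k < length h + d"
  shows "run n s h d ! k = bid_profile n s (take k (run n s h d))"
  using assms
proof (induction d arbitrary: h)
  case 0
  then show ?case by simp
next
  case (Suc d)
  show ?case
  proof (cases "k = length h")
    case True
    obtain t where "run n s (h @ [bid_profile n s h]) d = (h @ [bid_profile n s h]) @ t"
      using run_extends by blast
    with True show ?thesis by (simp add: nth_append)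
  next
    case False
    with Suc show ?thesis by simp
  qed
qed

lemma length_outcome: "length h \<le> m \<Longrightarrow> length (outcome n m s h) = m"
  using run_extends[of n s h "m - length h"] by (auto simp: outcome_def)

lemma take_outcome: "take (length h) (outcome n m s h) = h"
  using run_extends[of n s h "m - length h"] by (auto simp: outcome_def)

lemma nth_outcome:
  "length h \<le> k \<Longrightarrow> k < m \<Longrightarrow> outcome n m s h ! k = bid_profile n s (take k (outcome n m s h))"
  using nth_run[of h k "m - length h" n s] by (simp add: outcome_def)

lemma take_nth_prefix:
  assumes "take (length h) G = h" "k < length h"
  shows "take k G = take k h" "G ! k = h ! k"
  using assms by (metis min.absorb1 less_imp_le take_take) (metis assms nth_take)

lemma winner_prefix:
  "take (length h) G = h \<Longrightarrow> k < length h \<Longrightarrow> winner tb G k = tb (take k h) (h ! k)"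
  by (simp add: winner_def take_nth_prefix)

lemma payment_split:
  assumes "length h \<le> m" "take (length h) G = h"
  shows "(\<Sum>k\<in>{k. k < m \<and> winner tb G k = i}. (G ! k) i) =
           (\<Sum>k\<in>{k. k < length h \<and> tb (take k h) (h ! k) = i}. (h ! k) i)
         + (\<Sum>k\<in>{k. length h \<le> k \<and> k < m \<and> winner tb G k = i}. (G ! k) i)"
proof -
  have won: "{k. k < m \<and> winner tb G k = i} = {k. k < length h \<and> tb (take k h) (h ! k) = i}
          \<union> {k. length h \<le> k \<and> k < m \<and> winner tb G k = i}"
    using assms by (auto simp: winner_prefix)
  have "(\<Sum>k\<in>{k. k < m \<and> winner tb G k = i}. (G ! k) i) =
          (\<Sum>k\<in>{k. k < length h \<and> tb (take k h) (h ! k) = i}. (G ! k) i)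
        + (\<Sum>k\<in>{k. length h \<le> k \<and> k < m \<and> winner tb G k = i}. (G ! k) i)"
    unfolding won by (rule sum.union_disjoint) auto
  also have "(\<Sum>k\<in>{k. k < length h \<and> tb (take k h) (h ! k) = i}. (G ! k) i) =
             (\<Sum>k\<in>{k. k < length h \<and> tb (take k h) (h ! k) = i}. (h ! k) i)"
    using assms(2) by (intro sum.cong) (auto simp: take_nth_prefix)
  finally show ?thesis .
qed

definition market_val :: "nat \<Rightarrow> nat \<Rightarrow> real" where
  "market_val i j = (if i = 0 \<or> i = Suc j then 1 else 0)"

lemma unit_val_market:
  assumes "finite S"
  shows "unit_val market_val i S =
           (if i = 0 then (if S = {} then 0 else 1) else if i - 1 \<in> S then 1 else 0)"
proof (cases "S \<noteq> {} \<and> (i = 0 \<or> i - 1 \<in> S)")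
  case True
  then have "1 \<in> market_val i ` S"
    by (cases "i = 0") (auto simp: market_val_def image_iff intro: bexI[of _ "i - 1"])
  then have "Max (market_val i ` S) = 1"
    using assms by (intro Max_eqI) (auto simp: market_val_def)
  with True show ?thesis by (auto simp: unit_val_def)
next
  case False
  then have "S = {} \<or> market_val i ` S = {0}" by (auto simp: market_val_def)
  with False show ?thesis by (auto simp: unit_val_def)
qed

lemma unit_val_market_le_1: "finite S \<Longrightarrow> unit_val market_val i S \<le> 1"
  by (simp add: unit_val_market)

definition is_max_bid :: "nat \<Rightarrow> (nat \<Rightarrow> real) \<Rightarrow> nat \<Rightarrow> bool" where
  "is_max_bid n b j \<longleftrightarrow> j < n \<and> (\<forall>i<n. b i \<le> b j)"

lemma ex_is_max_bid:
  assumes "0 < n"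
  shows "\<exists>j. is_max_bid n b j"
proof -
  obtain j where "j < n" "b j = Max (b ` {..<n})"
    using Max_in[of "b ` {..<n}"] assms by fastforce
  then show ?thesis by (auto simp: is_max_bid_def)
qed

definition spe_tie :: "nat \<Rightarrow> history \<Rightarrow> (nat \<Rightarrow> real) \<Rightarrow> nat" where
  "spe_tie n h b =
     (if h = [] \<and> is_max_bid n b 0 then 0
      else if is_max_bid n b (Suc (length h)) then Suc (length h)
      else LEAST j. is_max_bid n b j)"

lemma is_max_bid_spe_tie: "0 < n \<Longrightarrow> is_max_bid n b (spe_tie n h b)"
  using LeastI_ex[OF ex_is_max_bid[of n b]] by (auto simp: spe_tie_def)

lemma is_max_bid_winner: "0 < n \<Longrightarrow> is_max_bid n (G ! k) (winner (spe_tie n) G k)"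
  by (simp add: winner_def is_max_bid_spe_tie)

lemma valid_tie_spe_tie: "0 < n \<Longrightarrow> valid_tie n (spe_tie n)"
  using is_max_bid_spe_tie unfolding valid_tie_def is_max_bid_def by blast

lemma spe_tie_owner_beats_generalist:
  assumes "h \<noteq> []" "Suc (length h) < n" "b (Suc (length h)) = b 0"
  shows "spe_tie n h b \<noteq> 0"
proof
  assume "spe_tie n h b = 0"
  moreover have "is_max_bid n b (spe_tie n h b)"
    using assms(2) by (intro is_max_bid_spe_tie) simp
  ultimately show False
    using assms by (auto simp: spe_tie_def is_max_bid_def)
qed

definition served :: "nat \<Rightarrow> history \<Rightarrow> bool" where
  "served n h \<longleftrightarrow> (\<exists>k<length h. spe_tie n (take k h) (h ! k) = 0)"

lemma served_take:
  "t \<le> length G \<Longrightarrow> served n (take t G) \<longleftrightarrow> (\<exists>k<t. winner (spe_tie n) G k = 0)"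
  by (auto simp: served_def winner_def min_def)

definition spe_bid :: "nat \<Rightarrow> nat \<Rightarrow> history \<Rightarrow> real" where
  "spe_bid n i h = (if served n h then 0 else if i = 0 \<or> i = Suc (length h) then 1 else 0)"

lemma spe_bid_bounds: "0 \<le> spe_bid n i h" "spe_bid n i h \<le> 1"
  by (auto simp: spe_bid_def)

lemma spe_tie_first_stage: "0 < n \<Longrightarrow> spe_tie n [] (bid_profile n (spe_bid n) []) = 0"
  by (simp add: spe_tie_def is_max_bid_def bid_profile_def spe_bid_def served_def)

locale spe_path =
  fixes m :: nat and h :: history
  assumes length_history: "length h \<le> m"
begin

abbreviation tie :: "history \<Rightarrow> (nat \<Rightarrow> real) \<Rightarrow> nat" where
  "tie \<equiv> spe_tie (Suc m)"

definition path :: history where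
  "path = outcome (Suc m) m (spe_bid (Suc m)) h"

lemma length_path: "length path = m"
  using length_history by (simp add: path_def length_outcome)

lemma take_path: "take (length h) path = h"
  by (simp add: path_def take_outcome)

lemma bid_path:
  "length h \<le> k \<Longrightarrow> k < m \<Longrightarrow> j < Suc m \<Longrightarrow> (path ! k) j = spe_bid (Suc m) j (take k path)"
  by (simp add: path_def nth_outcome bid_profile_def)

lemma served_path: "t \<le> m \<Longrightarrow> served (Suc m) (take t path) \<longleftrightarrow> (\<exists>k<t. winner tie path k = 0)"
  by (simp add: served_take length_path)

lemma no_bids_once_served:
  "length h \<le> k \<Longrightarrow> k < m \<Longrightarrow> served (Suc m) (take k path) \<Longrightarrow> j < Suc m \<Longrightarrow> (path ! k) j = 0"
  by (simp add: bid_path spe_bid_def)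

lemma served_path_mono:
  "served (Suc m) (take t path) \<Longrightarrow> t \<le> t' \<Longrightarrow> t' \<le> m \<Longrightarrow> served (Suc m) (take t' path)"
  by (meson order.trans served_path less_le_trans)

lemma generalist_wins_first_stage:
  assumes "h = []" "0 < m"
  shows "winner tie path 0 = 0"
proof -
  have "path ! 0 = bid_profile (Suc m) (spe_bid (Suc m)) []"
    unfolding path_def using assms nth_outcome[of h 0 m] by simp
  then show ?thesis by (simp add: winner_def spe_tie_first_stage)
qed

lemma winner_history_not_generalist:
  "\<not> served (Suc m) h \<Longrightarrow> take (length h) G = h \<Longrightarrow> k < length h \<Longrightarrow> winner tie G k \<noteq> 0"
  by (auto simp: served_def winner_prefix)

end

locale deviation = spe_path +
  fixes i :: nat and f :: "history \<Rightarrow> real"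
  assumes buyer: "i < Suc m"
    and deviation_nonneg: "\<And>x. 0 \<le> f x"
begin

abbreviation utility :: "history \<Rightarrow> real" where
  "utility G \<equiv> payoff m market_val (\<lambda>k. k) tie G i"

definition dev_path :: history where
  "dev_path = outcome (Suc m) m ((spe_bid (Suc m))(i := f)) h"

lemma length_dev_path: "length dev_path = m"
  using length_history by (simp add: dev_path_def length_outcome)

lemma take_dev_path: "take (length h) dev_path = h"
  by (simp add: dev_path_def take_outcome)

lemma bid_dev_path:
  "length h \<le> k \<Longrightarrow> k < m \<Longrightarrow> j < Suc m \<Longrightarrow> j \<noteq> i \<Longrightarrow>
     (dev_path ! k) j = spe_bid (Suc m) j (take k dev_path)"
  by (simp add: dev_path_def nth_outcome bid_profile_def)

lemma deviator_bid_nonneg: "length h \<le> k \<Longrightarrow> k < m \<Longrightarrow> 0 \<le> (dev_path ! k) i"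
  using buyer deviation_nonneg by (simp add: dev_path_def nth_outcome bid_profile_def)

lemma served_dev_path:
  "t \<le> m \<Longrightarrow> served (Suc m) (take t dev_path) \<longleftrightarrow> (\<exists>k<t. winner tie dev_path k = 0)"
  by (simp add: served_take length_dev_path)

definition won :: "history \<Rightarrow> nat set" where
  "won G = {k. k < m \<and> winner tie G k = i}"

definition past_payment :: real where
  "past_payment = (\<Sum>k\<in>{k. k < length h \<and> tie (take k h) (h ! k) = i}. (h ! k) i)"

definition future_wins :: "history \<Rightarrow> nat set" where
  "future_wins G = {k. length h \<le> k \<and> k < m \<and> winner tie G k = i}"

definition future_payment :: "history \<Rightarrow> real" where
  "future_payment G = (\<Sum>k\<in>future_wins G. (G ! k) i)"

lemma finite_won: "finite (won G)" and finite_future_wins: "finite (future_wins G)"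
  by (simp_all add: won_def future_wins_def)

lemma utility_split:
  assumes "take (length h) G = h"
  shows "utility G = unit_val market_val i (won G) - past_payment - future_payment G"
  using payment_split[OF length_history assms, where tb = tie and i = i]
  by (simp add: payoff_def won_def past_payment_def future_payment_def future_wins_def)

lemma future_payment_dev_path_nonneg: "0 \<le> future_payment dev_path"
  unfolding future_payment_def future_wins_def by (intro sum_nonneg) (simp add: deviator_bid_nonneg)

lemma utility_dev_path_le: "utility dev_path \<le> 1 - past_payment"
  using utility_split[OF take_dev_path] unit_val_market_le_1[OF finite_won[of dev_path], where i = i]
    future_payment_dev_path_nonneg by simp

lemma path_optimal_if_free_item:
  "unit_val market_val i (won path) = 1 \<Longrightarrow> future_payment path = 0 \<Longrightarrow>
     utility dev_path \<le> utility path"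
  using utility_split[OF take_path] utility_dev_path_le by simp

end

locale generalist_deviation = deviation m h 0 f for m h f
begin

lemma served_no_gain:
  assumes "served (Suc m) h"
  shows "utility dev_path \<le> utility path"
proof (rule path_optimal_if_free_item)
  obtain k where "k < length h" "winner tie path k = 0"
    using assms served_path[of "length h"] take_path length_history by auto
  with length_history have "k \<in> won path" by (simp add: won_def)
  with finite_won[of path] show "unit_val market_val 0 (won path) = 1"
    by (auto simp: unit_val_market)
  have "(path ! k) 0 = 0" if "k \<in> future_wins path" for k
  proof -
    from that have "length h \<le> k" "k < m" by (simp_all add: future_wins_def)
    with assms have "served (Suc m) (take k path)"
      using served_path_mono[of "length h"] by (simp add: take_path)
    with \<open>length h \<le> k\<close> \<open>k < m\<close> show ?thesis by (simp add: no_bids_once_served)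
  qed
  then show "future_payment path = 0" by (simp add: future_payment_def)
qed

lemma unserved_won:
  assumes "\<not> served (Suc m) h" "take (length h) G = h"
  shows "won G = future_wins G"
  unfolding won_def future_wins_def
  using winner_history_not_generalist[OF assms] leI by blast

lemma unserved_past_payment:
  assumes "\<not> served (Suc m) h"
  shows "past_payment = 0"
proof -
  have "{k. k < length h \<and> tie (take k h) (h ! k) = 0} = {}"
    using assms by (auto simp: served_def)
  then show ?thesis unfolding past_payment_def by (metis sum.empty)
qed

lemma unserved_utility_path_nonneg:
  assumes "\<not> served (Suc m) h"
  shows "0 \<le> utility path"
proof (cases "future_wins path = {}")
  case True
  then show ?thesis
    using utility_split[OF take_path] unserved_won[OF assms take_path]
      unserved_past_payment[OF assms]
    by (simp add: future_payment_def unit_val_def)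
next
  case False
  define t where "t = Min (future_wins path)"
  have t: "t \<in> future_wins path" and t_min: "\<And>k. k \<in> future_wins path \<Longrightarrow> t \<le> k"
    using Min_in[OF finite_future_wins False] Min_le[OF finite_future_wins] by (auto simp: t_def)
  have "(path ! k) 0 = 0" if "k \<in> future_wins path - {t}" for k
  proof -
    from that t_min have k: "length h \<le> k" "k < m" "t < k"
      by (force simp: future_wins_def)+
    from t have "winner tie path t = 0" by (simp add: future_wins_def)
    with k have "served (Suc m) (take k path)" by (auto simp: served_path)
    with k show ?thesis by (simp add: no_bids_once_served)
  qed
  then have "(\<Sum>k\<in>future_wins path - {t}. (path ! k) 0) = 0"
    by (intro sum.neutral) blast
  then have "future_payment path = (path ! t) 0"
    unfolding future_payment_def using sum.remove[OF finite_future_wins t, of "\<lambda>k. (path ! k) 0"]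
    by simp
  also have "\<dots> \<le> 1"
    using t by (simp add: future_wins_def bid_path spe_bid_bounds)
  finally show ?thesis
    using utility_split[OF take_path] unserved_won[OF assms take_path]
      unserved_past_payment[OF assms] False finite_future_wins[of path]
    by (simp add: unit_val_market)
qed

lemma unserved_before_first_win:
  assumes "\<not> served (Suc m) h" "t \<in> future_wins dev_path"
    and "\<And>k. k \<in> future_wins dev_path \<Longrightarrow> t \<le> k"
  shows "\<not> served (Suc m) (take t dev_path)"
proof
  assume "served (Suc m) (take t dev_path)"
  moreover have "t < m" using assms(2) by (simp add: future_wins_def)
  ultimately obtain k where k: "k < t" "winner tie dev_path k = 0"
    using served_dev_path by auto
  show False
  proof (cases "k < length h")
    case True
    with k assms(1) show False using winner_history_not_generalist take_dev_path by blast
  next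
    case False
    with k \<open>t < m\<close> have "k \<in> future_wins dev_path" by (simp add: future_wins_def)
    with k assms(3) show False by fastforce
  qed
qed

lemma unserved_utility_dev_path_nonpos:
  assumes "\<not> served (Suc m) h"
  shows "utility dev_path \<le> 0"
proof (cases "future_wins dev_path = {}")
  case True
  then show ?thesis
    using utility_split[OF take_dev_path] unserved_won[OF assms take_dev_path]
      unserved_past_payment[OF assms] future_payment_dev_path_nonneg
    by (simp add: unit_val_def)
next
  case False
  define t where "t = Min (future_wins dev_path)"
  have t: "t \<in> future_wins dev_path"
    and t_min: "\<And>k. k \<in> future_wins dev_path \<Longrightarrow> t \<le> k"
    using Min_in[OF finite_future_wins False] Min_le[OF finite_future_wins] by (auto simp: t_def)
  then have t_stage: "length h \<le> t" "t < m" "winner tie dev_path t = 0"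
    by (simp_all add: future_wins_def)
  have "\<not> served (Suc m) (take t dev_path)"
    using unserved_before_first_win[OF assms t] t_min by blast
  then have "(dev_path ! t) (Suc t) = 1"
    using t_stage by (simp add: bid_dev_path spe_bid_def length_dev_path)
  moreover have "is_max_bid (Suc m) (dev_path ! t) 0"
    using is_max_bid_winner[of "Suc m" dev_path t] t_stage by simp
  ultimately have "1 \<le> (dev_path ! t) 0"
    using t_stage unfolding is_max_bid_def by (metis Suc_mono)
  also have "\<dots> \<le> future_payment dev_path"
    unfolding future_payment_def using t
    by (intro member_le_sum finite_future_wins) (auto simp: future_wins_def deviator_bid_nonneg)
  finally show ?thesis
    using utility_split[OF take_dev_path] unserved_past_payment[OF assms]
      unit_val_market_le_1[OF finite_won[of dev_path], where i = 0]
    by simp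
qed

lemma no_gain: "utility dev_path \<le> utility path"
  using served_no_gain unserved_utility_path_nonneg unserved_utility_dev_path_nonpos
  by fastforce

end

locale owner_deviation = deviation m h "Suc j" f for m h j f
begin

lemma owner_bid_path:
  assumes "length h \<le> k" "k < m"
  shows "(path ! k) (Suc j) = (if k = j \<and> \<not> served (Suc m) (take k path) then 1 else 0)"
  using assms buyer by (simp add: bid_path spe_bid_def length_path)

lemma item_sold_no_gain:
  assumes "j < length h"
  shows "utility dev_path \<le> utility path"
proof -
  have "(path ! k) (Suc j) = 0" if "k \<in> future_wins path" for k
    using that assms by (auto simp: future_wins_def owner_bid_path)
  then have "future_payment path = 0" by (simp add: future_payment_def)
  moreover have "j \<in> won dev_path \<longleftrightarrow> j \<in> won path"
    using assms length_history
    by (simp add: won_def winner_prefix[OF take_path] winner_prefix[OF take_dev_path])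
  ultimately show ?thesis
    using utility_split[OF take_path] utility_split[OF take_dev_path]
      future_payment_dev_path_nonneg finite_won[of path] finite_won[of dev_path]
    by (simp add: unit_val_market)
qed

lemma served_no_gain:
  assumes "length h \<le> j" "served (Suc m) (take j path)"
  shows "utility dev_path \<le> utility path"
proof (rule path_optimal_if_free_item)
  have j: "j < m" "j \<noteq> 0"
    using assms buyer by (auto simp: served_def)
  moreover have "take j path \<noteq> []"
    using j length_path by auto
  moreover have "is_max_bid (Suc m) (path ! j) (Suc j)"
    using j assms by (simp add: is_max_bid_def no_bids_once_served)
  ultimately have "winner tie path j = Suc j"
    by (simp add: winner_def spe_tie_def length_path)
  with j have "j \<in> won path" by (simp add: won_def)
  with finite_won[of path] show "unit_val market_val (Suc j) (won path) = 1"
    by (simp add: unit_val_market)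
  have "(path ! k) (Suc j) = 0" if "k \<in> future_wins path" for k
    using that assms by (auto simp: future_wins_def owner_bid_path)
  then show "future_payment path = 0" by (simp add: future_payment_def)
qed

lemma unserved_utility_path:
  assumes "length h \<le> j" "\<not> served (Suc m) (take j path)"
  shows "utility path = - past_payment"
proof -
  have "future_payment path = (\<Sum>k\<in>future_wins path. if k = j then 1 else 0)"
    unfolding future_payment_def using assms
    by (intro sum.cong) (auto simp: future_wins_def owner_bid_path)
  also have "\<dots> = (if j \<in> future_wins path then 1 else 0)"
    by (simp add: finite_future_wins)
  finally show ?thesis
    using assms utility_split[OF take_path] finite_won[of path]
    by (simp add: unit_val_market won_def future_wins_def)
qed

text \<open>Before stage \<open>j\<close>, the owner of the item on sale matches the generalist's bid and wins
  the tie, whatever the deviator does.\<close>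

lemma unserved_dev_path_before_owner:
  assumes "length h \<le> j" "\<not> served (Suc m) (take j path)" "length h \<le> t" "t \<le> j"
  shows "\<not> served (Suc m) (take t dev_path)"
  using assms(3,4)
proof (induction t rule: dec_induct)
  case base
  show ?case
    using assms(1,2) served_path_mono[of "length h" j] buyer
    by (auto simp: take_path take_dev_path)
next
  case (step u)
  then have u: "length h \<le> u" "u < j" "j < m" "\<not> served (Suc m) (take u dev_path)"
    using buyer by auto
  have "h \<noteq> []"
    using u assms(2) generalist_wins_first_stage served_path[of j] by fastforce
  with u(1) have "0 < u" by (cases h) auto
  with u have "take u dev_path \<noteq> []"
    using length_dev_path by auto
  moreover have "(dev_path ! u) (Suc u) = (dev_path ! u) 0"
    using u by (simp add: bid_dev_path spe_bid_def length_dev_path)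
  ultimately have "winner tie dev_path u \<noteq> 0"
    using u spe_tie_owner_beats_generalist[of "take u dev_path" "Suc m"]
    by (simp add: winner_def length_dev_path)
  with u show ?case
    by (auto simp: served_dev_path less_Suc_eq)
qed

lemma unserved_utility_dev_path:
  assumes "length h \<le> j" "\<not> served (Suc m) (take j path)"
  shows "utility dev_path \<le> - past_payment"
proof (cases "j \<in> won dev_path")
  case True
  then have j: "j < m" "winner tie dev_path j = Suc j" by (simp_all add: won_def)
  have "(dev_path ! j) 0 = 1"
    using assms j unserved_dev_path_before_owner[OF assms]
    by (simp add: bid_dev_path spe_bid_def)
  then have "1 \<le> (dev_path ! j) (Suc j)"
    using is_max_bid_winner[of "Suc m" dev_path j] j
    unfolding is_max_bid_def by (metis zero_less_Suc)
  also have "\<dots> \<le> future_payment dev_path"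
    unfolding future_payment_def using assms j
    by (intro member_le_sum finite_future_wins) (auto simp: future_wins_def deviator_bid_nonneg)
  finally show ?thesis
    using utility_split[OF take_dev_path]
      unit_val_market_le_1[OF finite_won[of dev_path], where i = "Suc j"]
    by simp
next
  case False
  then show ?thesis
    using utility_split[OF take_dev_path] future_payment_dev_path_nonneg finite_won[of dev_path]
    by (simp add: unit_val_market)
qed

lemma no_gain: "utility dev_path \<le> utility path"
proof (cases "j < length h")
  case True
  then show ?thesis by (rule item_sold_no_gain)
next
  case False
  then show ?thesis
    using served_no_gain unserved_utility_path unserved_utility_dev_path
    by (cases "served (Suc m) (take j path)") auto
qed

end

lemma is_SPE_spe_bid:
  "is_SPE (Suc m) m market_val (\<lambda>k. k) (spe_tie (Suc m)) (spe_bid (Suc m))"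
  unfolding is_SPE_def
proof (intro conjI allI impI)
  show "valid_strategy (spe_bid (Suc m) i)" for i
    by (simp add: valid_strategy_def spe_bid_bounds)
next
  fix h i f
  assume "valid_history (Suc m) m h" "i < Suc m" "valid_strategy f"
  then have dev: "deviation m h i f"
    by unfold_locales (simp_all add: valid_history_def valid_strategy_def)
  show "payoff m market_val (\<lambda>k. k) (spe_tie (Suc m)) (outcome (Suc m) m ((spe_bid (Suc m))(i := f)) h) i
      \<le> payoff m market_val (\<lambda>k. k) (spe_tie (Suc m)) (outcome (Suc m) m (spe_bid (Suc m)) h) i"
  proof (cases i)
    case 0
    with dev have "generalist_deviation m h f" by (simp add: generalist_deviation_def)
    from generalist_deviation.no_gain[OF this] 0 dev show ?thesis
      by (simp add: spe_path.path_def deviation.dev_path_def deviation_def)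
  next
    case (Suc j)
    with dev have "owner_deviation m h j f" by (simp add: owner_deviation_def)
    from owner_deviation.no_gain[OF this] Suc dev show ?thesis
      by (simp add: spe_path.path_def deviation.dev_path_def deviation_def)
  qed
qed

lemma revenue_spe_bid:
  assumes "0 < m"
  shows "revenue m (spe_tie (Suc m)) (outcome (Suc m) m (spe_bid (Suc m)) []) = 1"
proof -
  interpret spe_path m "[]" by unfold_locales simp
  have first: "winner tie path 0 = 0"
    using assms by (simp add: generalist_wins_first_stage)
  have "(path ! 0) 0 = 1"
    using assms bid_path[of 0 0] by (simp add: spe_bid_def served_def)
  moreover have "(\<Sum>k\<in>{..<m} - {0}. (path ! k) (winner tie path k)) = 0"
  proof (rule sum.neutral, rule ballI)
    fix k assume k: "k \<in> {..<m} - {0}"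
    with first have "served (Suc m) (take k path)"
      by (auto simp: served_path)
    with k show "(path ! k) (winner tie path k) = 0"
      using is_max_bid_winner[of "Suc m" path k] by (simp add: no_bids_once_served is_max_bid_def)
  qed
  ultimately have "revenue m tie path = 1"
    unfolding revenue_def using assms first
      sum.remove[of "{..<m}" 0 "\<lambda>k. (path ! k) (winner tie path k)"] by simp
  then show ?thesis by (simp add: path_def)
qed

lemma walrasian_eq_unit_prices: "walrasian_eq (Suc m) m market_val (\<lambda>_. 1) Suc"
  unfolding walrasian_eq_def
proof (intro conjI allI impI)
  fix i T assume "i < Suc m" and T: "T \<subseteq> {..<m}"
  then have "finite T" using finite_subset by blast
  have "unit_val market_val i T - sum (\<lambda>_. 1) T \<le> 0"
  proof (cases "T = {}")
    case True
    then show ?thesis by (simp add: unit_val_def)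
  next
    case False
    with \<open>finite T\<close> have "1 \<le> card T" by (simp add: Suc_le_eq card_gt_0_iff)
    then show ?thesis using unit_val_market_le_1[OF \<open>finite T\<close>, of i] by simp
  qed
  moreover have "unit_val market_val i {j. j < m \<and> Suc j = i} - sum (\<lambda>_. 1) {j. j < m \<and> Suc j = i} = 0"
  proof (cases i)
    case 0
    then show ?thesis by (simp add: unit_val_def)
  next
    case (Suc j)
    with \<open>i < Suc m\<close> have "{j. j < m \<and> Suc j = i} = {j}" by auto
    with Suc show ?thesis by (simp add: unit_val_market)
  qed
  ultimately show "unit_val market_val i T - sum (\<lambda>_. 1) T
      \<le> unit_val market_val i {j. j < m \<and> Suc j = i} - sum (\<lambda>_. 1) {j. j < m \<and> Suc j = i}"
    by simp
qed auto

lemma walrasian_eq_demand: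
  "walrasian_eq n m v q a \<Longrightarrow> i < n \<Longrightarrow> T \<subseteq> {..<m} \<Longrightarrow>
     unit_val v i T - sum q T \<le> unit_val v i {j. j < m \<and> a j = i} - sum q {j. j < m \<and> a j = i}"
  by (simp add: walrasian_eq_def)

lemma walrasian_eq_bundle_price_nonneg:
  "walrasian_eq n m v q a \<Longrightarrow> 0 \<le> sum q {j. j < m \<and> a j = i}"
  by (intro sum_nonneg) (simp add: walrasian_eq_def)

lemma walrasian_eq_cheap_item_to_owner:
  assumes eq: "walrasian_eq (Suc m) m market_val q a" and "j < m" "q j < 1"
  shows "a j = Suc j"
proof (rule ccontr)
  assume "a j \<noteq> Suc j"
  then have "unit_val market_val (Suc j) {k. k < m \<and> a k = Suc j} = 0"
    by (simp add: unit_val_market)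
  moreover have "unit_val market_val (Suc j) {j} = 1"
    by (simp add: unit_val_market)
  ultimately show False
    using walrasian_eq_demand[OF eq, of "Suc j" "{j}"] walrasian_eq_bundle_price_nonneg[OF eq, of "Suc j"]
      assms(2,3)
    by simp
qed

text \<open>If item \<open>j\<close> were priced below 1, buyer 0 would prefer it to his bundle, so his bundle
  would contain an item priced below 1; but such an item goes to its owner.\<close>

lemma walrasian_eq_prices_ge_1:
  assumes eq: "walrasian_eq (Suc m) m market_val q a" and "j < m"
  shows "1 \<le> q j"
proof (rule ccontr)
  assume "\<not> 1 \<le> q j"
  define B where "B = {k. k < m \<and> a k = 0}"
  have "unit_val market_val 0 {j} - q j \<le> unit_val market_val 0 B - sum q B"
    using walrasian_eq_demand[OF eq, of 0 "{j}"] assms(2) by (simp add: B_def)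
  then have "1 - q j \<le> unit_val market_val 0 B - sum q B"
    by (simp add: unit_val_market)
  with \<open>\<not> 1 \<le> q j\<close> have "B \<noteq> {}" by (auto simp: unit_val_def)
  then obtain k where k: "k \<in> B" by blast
  have "q k \<le> sum q B"
    using eq k by (intro member_le_sum) (auto simp: B_def walrasian_eq_def)
  moreover have "unit_val market_val 0 B \<le> 1"
    by (simp add: B_def unit_val_market_le_1)
  ultimately have "q k < 1"
    using \<open>1 - q j \<le> _\<close> \<open>\<not> 1 \<le> q j\<close> by simp
  moreover from k have "k < m" "a k = 0" by (simp_all add: B_def)
  ultimately show False
    using walrasian_eq_cheap_item_to_owner[OF eq] by force
qed

lemma min_walrasian_eq_unit_prices: "min_walrasian_eq (Suc m) m market_val (\<lambda>_. 1)"
  unfolding min_walrasian_eq_def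
  using walrasian_eq_unit_prices walrasian_eq_prices_ge_1 by blast

theorem mainTheorem13:
  fixes m :: nat
  assumes "m \<ge> 1"
  shows "\<exists>v :: nat \<Rightarrow> nat \<Rightarrow> real.
           (\<forall>i j. 0 \<le> v i j) \<and>
           (\<exists>p. min_walrasian_eq (m + 1) m v p \<and> sum p {..<m} = real m) \<and>
           (\<exists>\<sigma> tb s. bij_betw \<sigma> {..<m} {..<m} \<and> valid_tie (m + 1) tb \<and>
              is_SPE (m + 1) m v \<sigma> tb s \<and>
              revenue m tb (outcome (m + 1) m s []) = 1)"
proof (intro exI conjI)
  show "\<forall>i j. 0 \<le> market_val i j" by (simp add: market_val_def)
  show "min_walrasian_eq (m + 1) m market_val (\<lambda>_. 1)"
    using min_walrasian_eq_unit_prices by simp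
  show "sum (\<lambda>_. 1) {..<m} = real m" by simp
  show "bij_betw (\<lambda>k. k) {..<m} {..<m}" by (simp add: bij_betw_def)
  show "valid_tie (m + 1) (spe_tie (Suc m))" using valid_tie_spe_tie by simp
  show "is_SPE (m + 1) m market_val (\<lambda>k. k) (spe_tie (Suc m)) (spe_bid (Suc m))"
    using is_SPE_spe_bid by simp
  show "revenue m (spe_tie (Suc m)) (outcome (m + 1) m (spe_bid (Suc m)) []) = 1"
    using revenue_spe_bid assms by simp
qed

end
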